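(* Let $n\ge3$, $2\le k\le n$, $0<r_1<r_2$, and let $\varphi$ be a function of $\rho>0$ satisfying (a) $\varphi(\rho)>0$; (b) $\varphi(\rho)>1$ for $\rho\le r_1$; (c) $\varphi(\rho)<1$ for $\rho\ge r_2$; (d) $\varphi'(\rho)<0$. Let $e=(1,\dots,1)\in\mathbb{R}^n$. Then the equation \[ \frac{\sigma_k(\kappa(X))}{\sigma_{k-1}(\kappa(X))}-\varphi(|X|)\frac{\sigma_k(e)}{\sigma_{k-1}(e)}\frac{1}{|X|}=0\qquad (X\in M) \] has a unique admissible (star-shaped, $(k-1)$-convex, closed) solution hypersurface $M\subset\mathbb{R}^{n+1}$, namely the sphere $M=\{X:|X|=\rho_0\}$, where $\rho_0$ is the solution of $\varphi(\rho_0)=1$.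
   Context: $\sigma_l$ denotes the $l$-th elementary symmetric polynomial on $\mathbb{R}^n$. $\kappa(X)$ is the vector of principal curvatures of $M$ at $X$ with respect to the outward unit normal $\nu$, via $h_{ij}=-\langle\partial_i\partial_jX,\nu\rangle$ (a sphere of radius $r$ about the origin has curvatures $1/r$). $\Gamma_m=\{\lambda:\sigma_j(\lambda)>0,\ 1\le j\le m\}$; $M$ is $m$-convex if $\kappa(X)\in\Gamma_m$ everywhere. Star-shaped means $M=\{\rho(x)x:x\in\mathbb{S}^n\}$ with $\rho>0$ smooth. *)

theory Defs
  imports "HOL-Analysis.Analysis"
begin

text \<open>Elementary symmetric polynomial sigma_l on R^n, vectors given as nat => real
  with indices 0..n-1.\<close>
definition esym :: "nat \<Rightarrow> nat \<Rightarrow> (nat \<Rightarrow> real) \<Rightarrow> real" where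
  "esym n l lam = (\<Sum>S\<in>{S. S \<subseteq> {..<n} \<and> card S = l}. \<Prod>i\<in>S. lam i)"

definition Gamma_cone :: "nat \<Rightarrow> nat \<Rightarrow> (nat \<Rightarrow> real) set" where
  "Gamma_cone n m = {lam. \<forall>j\<in>{1..m}. esym n j lam > 0}"

definition dirD :: "('a::real_normed_vector \<Rightarrow> real) \<Rightarrow> 'a \<Rightarrow> 'a \<Rightarrow> real" where
  "dirD f u = (\<lambda>y. frechet_derivative f (at y) u)"

fun iter_dirD :: "('a::real_normed_vector \<Rightarrow> real) \<Rightarrow> 'a list \<Rightarrow> 'a \<Rightarrow> real" where
  "iter_dirD f [] = f"
| "iter_dirD f (u # us) = dirD (iter_dirD f us) u"

definition smooth_on :: "'a::real_normed_vector set \<Rightarrow> ('a \<Rightarrow> real) \<Rightarrow> bool" where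
  "smooth_on U f \<longleftrightarrow> (\<forall>us. iter_dirD f us differentiable_on U)"

definition star_hypersurface :: "(real^'m \<Rightarrow> real) \<Rightarrow> (real^'m) set" where
  "star_hypersurface rho = (\<lambda>x. rho x *\<^sub>R x) ` sphere 0 1"

definition radial_ext :: "(real^'m \<Rightarrow> real) \<Rightarrow> real^'m \<Rightarrow> real" where
  "radial_ext rho y = rho (y /\<^sub>R norm y)"

text \<open>Admissible radial functions: positive and smooth on the sphere S^n (smoothness on
  S^n expressed as smoothness of the homogeneous extension on R^(n+1) minus 0).\<close>
definition admissible_radial :: "(real^'m \<Rightarrow> real) \<Rightarrow> bool" where
  "admissible_radial rho \<longleftrightarrow> (\<forall>x\<in>sphere 0 1. rho x > 0) \<and> smooth_on (- {0}) (radial_ext rho)"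

text \<open>Defining function: M = {F = 0}, F increasing outward, so grad F / |grad F| is the
  outward unit normal.\<close>
definition level_fun :: "(real^'m \<Rightarrow> real) \<Rightarrow> real^'m \<Rightarrow> real" where
  "level_fun rho y = norm y - radial_ext rho y"

definition gradient_vec :: "(real^'m \<Rightarrow> real) \<Rightarrow> real^'m \<Rightarrow> real^'m" where
  "gradient_vec F X = (\<chi> i. frechet_derivative F (at X) (axis i 1))"

text \<open>Second fundamental form of the level set {F = 0} at X w.r.t. the outward normal
  nu = grad F/|grad F|: h(u,v) = D^2F(X)(u,v)/|grad F(X)| for tangent u, v
  (equal to -<d_i d_j X, nu> in a parametrisation; a sphere of radius r gets 1/r).\<close>
definition second_ff :: "(real^'m \<Rightarrow> real) \<Rightarrow> real^'m \<Rightarrow> real^'m \<Rightarrow> real^'m \<Rightarrow> real" where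
  "second_ff F X u v = frechet_derivative (dirD F u) (at X) v / norm (gradient_vec F X)"

definition principal_curvatures ::
    "nat \<Rightarrow> (real^'m \<Rightarrow> real) \<Rightarrow> real^'m \<Rightarrow> (nat \<Rightarrow> real) \<Rightarrow> bool" where
  "principal_curvatures n rho X kappa \<longleftrightarrow>
     (\<exists>e :: nat \<Rightarrow> real^'m.
        (\<forall>i<n. \<forall>j<n. inner (e i) (e j) = (if i = j then 1 else 0)) \<and>
        (\<forall>i<n. frechet_derivative (level_fun rho) (at X) (e i) = 0) \<and>
        (\<forall>i<n. \<forall>j<n. second_ff (level_fun rho) X (e i) (e j) = (if i = j then kappa i else 0)))"

definition solves_eq ::
    "nat \<Rightarrow> nat \<Rightarrow> (real \<Rightarrow> real) \<Rightarrow> (real^'m \<Rightarrow> real) \<Rightarrow> bool" where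
  "solves_eq n k phi rho \<longleftrightarrow>
     (\<forall>X\<in>star_hypersurface rho. \<exists>kappa.
        principal_curvatures n rho X kappa \<and> kappa \<in> Gamma_cone n (k - 1) \<and>
        esym n k kappa / esym n (k - 1) kappa
          - phi (norm X) * (esym n k (\<lambda>_. 1) / esym n (k - 1) (\<lambda>_. 1)) * (1 / norm X) = 0)"

end

(*
  Where |X| attains its maximum
  rho_max, M lies inside the sphere of radius rho_max and touches it, so every principal
  curvature is at least 1 / rho_max; where |X| attains its minimum rho_min, every principal
  curvature is at most 1 / rho_min, and there positivity of phi makes sigma_k(kappa) > 0, so
  kappa lies in Gamma_k. For kappa in Gamma_k with all entries bounded above (below)
  by c, the identities sum_i kappa_i sigma_(k-1)(kappa|i) = k sigma_k and
  sum_i sigma_(k-1)(kappa|i) = (n - k + 1) sigma_(k-1) give sigma_k / sigma_(k-1) <= (>=)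
  c sigma_k(e) / sigma_(k-1)(e); the upper bound needs sigma_(k-1)(kappa|i) >= 0, i.e. that
  deleting an entry maps Gamma_k into Gamma_(k-1), which follows from Newton's inequality
  sigma_(j-1) sigma_(j+1) <= sigma_j^2 (proved by Rolle's theorem for distinct entries and by
  perturbation in general). Inserting this into the equation yields phi(rho_max) >= 1 >=
  phi(rho_min), so rho_max <= rho0 <= rho_min since phi is strictly decreasing: M is the sphere
  of radius rho0, all of whose principal curvatures equal 1 / rho0.
*)

theory Submission
  imports Defs "HOL-Computational_Algebra.Polynomial"
begin

section \<open>Elementary symmetric functions\<close>

definition esym_on :: "'a set \<Rightarrow> nat \<Rightarrow> ('a \<Rightarrow> 'b::comm_semiring_1) \<Rightarrow> 'b" where
  "esym_on A l f = (\<Sum>S\<in>{S. S \<subseteq> A \<and> card S = l}. \<Prod>i\<in>S. f i)"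

lemma esym_eq_esym_on: "esym n l f = esym_on {..<n} l f"
  by (simp add: esym_def esym_on_def)

lemma esym_on_0 [simp]: "finite A \<Longrightarrow> esym_on A 0 f = 1"
proof -
  assume "finite A"
  then have "{S. S \<subseteq> A \<and> card S = 0} = {{}}" by (auto dest: finite_subset)
  then show ?thesis by (simp add: esym_on_def)
qed

lemma esym_on_eq_0:
  assumes "finite A" "card A < l"
  shows "esym_on A l f = 0"
proof -
  have "S \<notin> {S. S \<subseteq> A \<and> card S = l}" for S
  proof
    assume "S \<in> {S. S \<subseteq> A \<and> card S = l}"
    then have "card S \<le> card A" "card S = l" using card_mono[OF assms(1)] by auto
    then show False using assms(2) by simp
  qed
  then have empty: "{S. S \<subseteq> A \<and> card S = l} = {}" by blast
  show ?thesis unfolding esym_on_def empty by simp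
qed

lemma esym_on_empty [simp]: "esym_on {} l f = (if l = 0 then 1 else 0)"
  by (simp add: esym_on_eq_0)

lemma esym_on_insert:
  assumes "finite A" "a \<notin> A"
  shows "esym_on (insert a A) (Suc l) f = f a * esym_on A l f + esym_on A (Suc l) f"
proof -
  let ?with_a = "{S. S \<subseteq> insert a A \<and> card S = Suc l \<and> a \<in> S}"
  let ?without_a = "{S. S \<subseteq> A \<and> card S = Suc l}"
  let ?Q = "{S. S \<subseteq> A \<and> card S = l}"
  have split: "{S. S \<subseteq> insert a A \<and> card S = Suc l} = ?with_a \<union> ?without_a"
    using assms by auto
  have bij: "bij_betw (insert a) ?Q ?with_a"
  proof (rule bij_betwI[where g = "\<lambda>S. S - {a}"])
    show "insert a \<in> ?Q \<rightarrow> ?with_a"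
      using assms by (auto simp: card_insert_if finite_subset)
    show "(\<lambda>S. S - {a}) \<in> ?with_a \<rightarrow> ?Q"
      using assms by (auto simp: finite_subset card_Diff_singleton)
  qed (use assms in auto)
  have "(\<Sum>S\<in>?with_a. \<Prod>i\<in>S. f i) = (\<Sum>S\<in>?Q. \<Prod>i\<in>insert a S. f i)"
    using sum.reindex_bij_betw[OF bij, of "\<lambda>S. \<Prod>i\<in>S. f i"] by simp
  also have "\<dots> = (\<Sum>S\<in>?Q. f a * (\<Prod>i\<in>S. f i))"
  proof (intro sum.cong refl)
    fix S assume "S \<in> ?Q"
    then have "finite S" "a \<notin> S" using assms finite_subset by auto
    then show "(\<Prod>i\<in>insert a S. f i) = f a * (\<Prod>i\<in>S. f i)" by simp
  qed
  also have "\<dots> = f a * esym_on A l f" by (simp add: esym_on_def sum_distrib_left)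
  finally have "(\<Sum>S\<in>?with_a. \<Prod>i\<in>S. f i) = f a * esym_on A l f" .
  moreover have "esym_on (insert a A) (Suc l) f
      = (\<Sum>S\<in>?with_a. \<Prod>i\<in>S. f i) + (\<Sum>S\<in>?without_a. \<Prod>i\<in>S. f i)"
    unfolding esym_on_def split using assms
    by (intro sum.union_disjoint) (auto intro: finite_subset[of _ "Pow (insert a A)"])
  ultimately show ?thesis by (simp add: esym_on_def)
qed

lemma esym_on_insert_if:
  assumes "finite A" "a \<notin> A"
  shows "esym_on (insert a A) l f = (if l = 0 then 1 else f a * esym_on A (l - 1) f + esym_on A l f)"
  using esym_on_insert[OF assms, of "l - 1" f] assms by (cases l) auto

lemma esym_on_card: "finite A \<Longrightarrow> esym_on A (card A) f = (\<Prod>i\<in>A. f i)"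
proof -
  assume "finite A"
  then have "{S. S \<subseteq> A \<and> card S = card A} = {A}" using card_subset_eq by blast
  then show ?thesis by (simp add: esym_on_def)
qed

lemma esym_on_const:
  assumes "finite A"
  shows "esym_on A l (\<lambda>_. c) = of_nat (card A choose l) * c ^ l"
proof -
  have "esym_on A l (\<lambda>_. c) = (\<Sum>S\<in>{S. S \<subseteq> A \<and> card S = l}. c ^ l)"
    unfolding esym_on_def by (intro sum.cong refl) simp
  then show ?thesis using n_subsets[OF assms] by simp
qed

lemma esym_on_nonneg:
  fixes f :: "'a \<Rightarrow> 'b::linordered_semidom"
  shows "(\<And>i. i \<in> A \<Longrightarrow> 0 \<le> f i) \<Longrightarrow> 0 \<le> esym_on A l f"
  unfolding esym_on_def by (intro sum_nonneg prod_nonneg) auto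

lemma esym_on_pos:
  fixes f :: "'a \<Rightarrow> 'b::linordered_semidom"
  assumes "finite A" "l \<le> card A" "\<And>i. i \<in> A \<Longrightarrow> 0 < f i"
  shows "0 < esym_on A l f"
proof -
  obtain S where "S \<subseteq> A" "card S = l" using obtain_subset_with_card_n[OF assms(2)] by blast
  then have "{S. S \<subseteq> A \<and> card S = l} \<noteq> {}" by blast
  moreover have "finite {S. S \<subseteq> A \<and> card S = l}"
    using assms(1) by (auto intro: finite_subset[of _ "Pow A"])
  moreover have "0 < (\<Prod>i\<in>S. f i)" if "S \<subseteq> A" for S
    using that assms(3) by (auto intro!: prod_pos)
  ultimately show ?thesis
    unfolding esym_on_def by (intro sum_pos) auto
qed

lemma sum_insert_remove:
  assumes "finite A" "a \<notin> A"
  shows "(\<Sum>i\<in>insert a A. g i (insert a A - {i})) = g a A + (\<Sum>i\<in>A. g i (insert a (A - {i})))"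
proof -
  have "insert a A - {i} = insert a (A - {i})" if "i \<in> A" for i
    using assms that by auto
  then show ?thesis using assms by (simp add: insert_Diff_if)
qed

lemma sum_esym_on_remove:
  fixes f :: "'a \<Rightarrow> 'b::comm_ring_1"
  assumes "finite A"
  shows "(\<Sum>i\<in>A. esym_on (A - {i}) l f) = (of_nat (card A) - of_nat l) * esym_on A l f"
  using assms
proof (induction A arbitrary: l rule: finite_induct)
  case (insert a A)
  show ?case
  proof (cases l)
    case (Suc l')
    have "(\<Sum>i\<in>insert a A. esym_on (insert a A - {i}) l f)
        = esym_on A l f + (\<Sum>i\<in>A. esym_on (insert a (A - {i})) l f)"
      by (rule sum_insert_remove[OF insert.hyps, of "\<lambda>_ S. esym_on S l f"])
    also have "\<dots> = esym_on A l f
        + (\<Sum>i\<in>A. f a * esym_on (A - {i}) l' f + esym_on (A - {i}) l f)"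
      using insert Suc by (simp add: esym_on_insert)
    also have "\<dots> = esym_on A l f + f a * ((of_nat (card A) - of_nat l') * esym_on A l' f)
        + (of_nat (card A) - of_nat l) * esym_on A l f"
      by (simp add: sum.distrib insert.IH flip: sum_distrib_left)
    also have "\<dots> = (of_nat (card (insert a A)) - of_nat l) * esym_on (insert a A) l f"
      using insert Suc by (simp add: esym_on_insert algebra_simps)
    finally show ?thesis .
  qed (use insert sum_insert_remove[OF insert.hyps, of "\<lambda>_ S. esym_on S 0 f"] in simp)
qed simp

lemma sum_mult_esym_on_remove:
  assumes "finite A"
  shows "(\<Sum>i\<in>A. f i * esym_on (A - {i}) l f) = of_nat (Suc l) * esym_on A (Suc l) f"
  using assms
proof (induction A arbitrary: l rule: finite_induct)
  case (insert a A)
  show ?case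
  proof (cases l)
    case 0
    have "(\<Sum>i\<in>insert a A. f i * esym_on (insert a A - {i}) l f)
        = f a * esym_on A l f + (\<Sum>i\<in>A. f i * esym_on (insert a (A - {i})) l f)"
      by (rule sum_insert_remove[OF insert.hyps, of "\<lambda>i S. f i * esym_on S l f"])
    then show ?thesis
      using insert insert.IH[of 0] 0 by (simp add: esym_on_insert)
  next
    case (Suc l')
    have "(\<Sum>i\<in>insert a A. f i * esym_on (insert a A - {i}) l f)
        = f a * esym_on A l f + (\<Sum>i\<in>A. f i * esym_on (insert a (A - {i})) l f)"
      by (rule sum_insert_remove[OF insert.hyps, of "\<lambda>i S. f i * esym_on S l f"])
    also have "\<dots> = f a * esym_on A l f
          + (\<Sum>i\<in>A. f a * (f i * esym_on (A - {i}) l' f) + f i * esym_on (A - {i}) l f)"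
      using insert Suc by (simp add: esym_on_insert algebra_simps)
    also have "\<dots> = f a * esym_on A l f + (f a * (of_nat l * esym_on A l f)
        + of_nat (Suc l) * esym_on A (Suc l) f)"
      using Suc by (simp add: sum.distrib insert.IH flip: sum_distrib_left)
    also have "\<dots> = of_nat (Suc l) * esym_on (insert a A) (Suc l) f"
      using insert by (simp add: esym_on_insert algebra_simps)
    finally show ?thesis .
  qed
qed simp

lemma esym_on_inverse:
  fixes g :: "'a \<Rightarrow> 'b::field"
  assumes B: "finite B" and nz: "\<And>i. i \<in> B \<Longrightarrow> g i \<noteq> 0" and l: "l \<le> card B"
  shows "esym_on B l (\<lambda>i. inverse (g i)) * (\<Prod>i\<in>B. g i) = esym_on B (card B - l) g"
proof -
  let ?P = "{S. S \<subseteq> B \<and> card S = l}" and ?Q = "{S. S \<subseteq> B \<and> card S = card B - l}"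
  have bij: "bij_betw (\<lambda>S. B - S) ?P ?Q"
    by (rule bij_betwI[where g = "\<lambda>S. B - S"])
      (use B l in \<open>auto simp: card_Diff_subset finite_subset\<close>)
  have "(\<Prod>i\<in>S. inverse (g i)) * (\<Prod>i\<in>B. g i) = (\<Prod>i\<in>B - S. g i)" if "S \<in> ?P" for S
  proof -
    have "(\<Prod>i\<in>B. g i) = (\<Prod>i\<in>S. g i) * (\<Prod>i\<in>B - S. g i)"
      using B that prod.subset_diff[of S B g] by (simp add: ac_simps)
    moreover have "finite S" using B that finite_subset by blast
    then have "(\<Prod>i\<in>S. g i) \<noteq> 0" using that nz by auto
    moreover have "(\<Prod>i\<in>S. inverse (g i)) = inverse (\<Prod>i\<in>S. g i)"
      using prod_inversef[of g S] by (simp add: comp_def)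
    ultimately show ?thesis by simp
  qed
  then have "esym_on B l (\<lambda>i. inverse (g i)) * (\<Prod>i\<in>B. g i) = (\<Sum>S\<in>?P. \<Prod>i\<in>B - S. g i)"
    by (simp add: esym_on_def sum_distrib_right)
  also have "\<dots> = esym_on B (card B - l) g"
    using sum.reindex_bij_betw[OF bij, of "\<lambda>S. \<Prod>i\<in>S. g i"] by (simp add: esym_on_def)
  finally show ?thesis .
qed

section \<open>Newton's inequality\<close>

definition esym_poly :: "'a set \<Rightarrow> ('a \<Rightarrow> 'b::comm_ring_1) \<Rightarrow> 'b poly" where
  "esym_poly A f = (\<Prod>i\<in>A. [:f i, 1:])"

lemma coeff_esym_poly:
  assumes "finite A"
  shows "coeff (esym_poly A f) j = (if j \<le> card A then esym_on A (card A - j) f else 0)"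
  using assms
proof (induction A arbitrary: j rule: finite_induct)
  case empty
  then show ?case by (simp add: esym_poly_def)
next
  case (insert a A)
  have P: "esym_poly (insert a A) f = [:f a, 1:] * esym_poly A f"
    using insert by (simp add: esym_poly_def)
  show ?case
  proof (cases j)
    case 0
    then show ?thesis using insert by (simp add: P esym_on_insert_if esym_on_eq_0)
  next
    case (Suc j')
    have "coeff (esym_poly (insert a A) f) j = f a * coeff (esym_poly A f) j + coeff (esym_poly A f) j'"
      unfolding P Suc by (simp add: coeff_pCons)
    then show ?thesis using insert Suc by (auto simp: esym_on_insert_if esym_on_eq_0 Suc_diff_le)
  qed
qed

lemma degree_esym_poly:
  fixes f :: "'a \<Rightarrow> 'b::idom"
  assumes "finite A"
  shows "degree (esym_poly A f) = card A"
  unfolding esym_poly_def using assms by (subst degree_prod_eq_sum_degree) auto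

lemma poly_esym_poly: "poly (esym_poly A f) x = (\<Prod>i\<in>A. f i + x)"
  by (simp add: esym_poly_def poly_prod)

lemma poly_eq_smult_prod_linear_factors:
  fixes p :: "'a::idom poly"
  assumes "finite Z" "degree p = card Z" "\<And>z. z \<in> Z \<Longrightarrow> poly p z = 0"
  shows "p = smult (lead_coeff p) (\<Prod>z\<in>Z. [:-z, 1:])"
  using assms
proof (induction Z arbitrary: p rule: finite_induct)
  case empty
  then show ?case by (metis degree_0_id card.empty lead_coeff_pCons(2) prod.empty smult_one pCons_0_0)
next
  case (insert z Z)
  then have "[:-z, 1:] dvd p" by (simp add: poly_eq_0_iff_dvd)
  then obtain q where q: "p = [:-z, 1:] * q" by blast
  have "p \<noteq> 0" using insert by (metis card_insert_disjoint degree_0 nat.distinct(1))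
  then have "q \<noteq> 0" using q by auto
  have "degree p = degree [:-z, 1:] + degree q"
    unfolding q by (rule degree_mult_eq) (use \<open>q \<noteq> 0\<close> in auto)
  then have dq: "degree q = card Z" using insert by simp
  have "poly q w = 0" if "w \<in> Z" for w
    using insert.prems(2)[of w] insert.hyps(2) that q by auto
  then have "q = smult (lead_coeff q) (\<Prod>z\<in>Z. [:-z, 1:])" using insert.IH dq by blast
  moreover have "lead_coeff p = lead_coeff q" unfolding q lead_coeff_mult by simp
  ultimately show ?case using q insert.hyps by (metis mult_smult_right prod.insert)
qed

lemma pderiv_roots_interlace:
  fixes p :: "real poly"
  assumes sorted: "sorted_wrt (<) xs" and len: "length xs = Suc m"
    and roots: "\<And>x. x \<in> set xs \<Longrightarrow> poly p x = 0"
  obtains z where "strict_mono_on {..<m} z" "\<And>l. l < m \<Longrightarrow> poly (pderiv p) (z l) = 0"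
proof -
  have "\<exists>z. xs ! l < z \<and> z < xs ! Suc l \<and> poly (pderiv p) z = 0" if l: "l < m" for l
  proof -
    have "xs ! l < xs ! Suc l" using sorted_wrt_nth_less[OF sorted, of l "Suc l"] l len by simp
    moreover have "poly p (xs ! l) = poly p (xs ! Suc l)" using roots l len by simp
    moreover have "continuous_on {xs ! l..xs ! Suc l} (poly p)"
      by (rule continuous_on_poly[OF continuous_on_id])
    moreover have "poly p differentiable (at x)" for x
      using poly_DERIV real_differentiable_def by blast
    ultimately obtain z where "xs ! l < z" "z < xs ! Suc l" "DERIV (poly p) z :> 0"
      using Rolle[of "xs ! l" "xs ! Suc l" "poly p"] by blast
    then show ?thesis using DERIV_unique poly_DERIV by blast
  qed
  then obtain z where z: "\<And>l. l < m \<Longrightarrow> xs ! l < z l \<and> z l < xs ! Suc l \<and> poly (pderiv p) (z l) = 0"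
    by metis
  have "strict_mono_on {..<m} z"
  proof (rule strict_mono_onI)
    fix l l' assume "l \<in> {..<m}" "l' \<in> {..<m}" "l < l'"
    moreover from this have "xs ! Suc l \<le> xs ! l'"
      using sorted_wrt_nth_less[OF sorted, of "Suc l" l'] len by (cases "Suc l = l'") auto
    ultimately show "z l < z l'" using z[of l] z[of l'] by fastforce
  qed
  then show thesis using that z by blast
qed

lemma pderiv_esym_poly:
  fixes f :: "'a \<Rightarrow> real"
  assumes A: "finite A" "card A = Suc m" and inj: "inj_on f A"
  obtains g where "inj_on g {..<m}"
    "pderiv (esym_poly A f) = smult (of_nat (Suc m)) (esym_poly {..<m} g)"
proof -
  define P where "P = esym_poly A f"
  define xs where "xs = sorted_list_of_set ((\<lambda>i. - f i) ` A)"
  have "inj_on (\<lambda>i. - f i) A" using inj by (auto simp: inj_on_def)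
  then have "length xs = Suc m" using A by (simp add: xs_def card_image)
  moreover have "poly P x = 0" if "x \<in> set xs" for x
  proof -
    obtain i where "i \<in> A" "x = - f i" using \<open>x \<in> set xs\<close> A by (auto simp: xs_def)
    then show ?thesis unfolding P_def poly_esym_poly using A by (intro prod_zero) auto
  qed
  ultimately obtain z where mono: "strict_mono_on {..<m} z"
    and z: "\<And>l. l < m \<Longrightarrow> poly (pderiv P) (z l) = 0"
    using pderiv_roots_interlace[of xs m P] by (auto simp: xs_def strict_sorted_list_of_set)
  have injz: "inj_on z {..<m}" using mono by (rule strict_mono_on_imp_inj_on)
  have dP: "degree P = Suc m" unfolding P_def using degree_esym_poly[OF A(1), of f] A(2) by simp
  have "pderiv P = smult (lead_coeff (pderiv P)) (\<Prod>w\<in>z ` {..<m}. [:-w, 1:])"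
    using injz dP z by (intro poly_eq_smult_prod_linear_factors) (auto simp: degree_pderiv card_image)
  moreover have "lead_coeff (pderiv P) = of_nat (Suc m)"
    using dP A by (simp add: degree_pderiv coeff_pderiv P_def coeff_esym_poly)
  moreover have "(\<Prod>w\<in>z ` {..<m}. [:-w, 1:]) = esym_poly {..<m} (\<lambda>l. - z l)"
    unfolding esym_poly_def using prod.reindex[OF injz, of "\<lambda>w. [:-w, 1:]"] by simp
  moreover have "inj_on (\<lambda>l. - z l) {..<m}" using injz by (auto simp: inj_on_def)
  ultimately show ?thesis using that unfolding P_def by metis
qed

definition esym_mean :: "'a set \<Rightarrow> nat \<Rightarrow> ('a \<Rightarrow> real) \<Rightarrow> real" where
  "esym_mean A l f = esym_on A l f / real (card A choose l)"

lemma esym_mean_pderiv: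
  fixes f :: "'a \<Rightarrow> real"
  assumes A: "finite A" "card A = Suc m" and inj: "inj_on f A"
  obtains g where "inj_on g {..<m}" "\<forall>l\<le>m. esym_mean {..<m} l g = esym_mean A l f"
proof -
  obtain g where g: "inj_on g {..<m}"
    and P': "pderiv (esym_poly A f) = smult (of_nat (Suc m)) (esym_poly {..<m} g)"
    using pderiv_esym_poly[OF assms] by blast
  have "esym_mean {..<m} l g = esym_mean A l f" if l: "l \<le> m" for l
  proof -
    have coeff: "real (Suc m) * esym_on {..<m} l g = real (Suc m - l) * esym_on A l f"
      using arg_cong[OF P', of "\<lambda>p. coeff p (m - l)"] l A
      by (simp add: coeff_pderiv coeff_esym_poly Suc_diff_le)
    have binom: "real (Suc m - l) * real (Suc m choose l) = real (Suc m) * real (m choose l)"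
      using binomial_absorb_comp[of "Suc m" l] by (metis diff_Suc_1 of_nat_mult)
    have "real (m choose l) > 0" "real (Suc m - l) > 0" using l by auto
    then have "esym_on {..<m} l g / real (m choose l)
        = real (Suc m - l) * esym_on A l f / (real (Suc m - l) * real (Suc m choose l))"
      using coeff binom by (simp add: field_simps del: of_nat_Suc)
    then show ?thesis
      using \<open>real (Suc m - l) > 0\<close> A unfolding esym_mean_def by simp
  qed
  then show ?thesis using g that by blast
qed

lemma esym_mean_reduce:
  fixes f :: "nat \<Rightarrow> real"
  assumes A: "finite A" "inj_on f A" and j: "j \<le> card A"
  obtains B :: "nat set" and g :: "nat \<Rightarrow> real"
  where "finite B" "card B = j" "inj_on g B" "\<forall>l\<le>j. esym_mean B l g = esym_mean A l f"
proof -
  have "\<exists>B g. finite B \<and> card B = card A - r \<and> inj_on g B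
      \<and> (\<forall>l\<le>card A - r. esym_mean B l (g :: nat \<Rightarrow> real) = esym_mean A l f)"
    if "r \<le> card A" for r
    using that
  proof (induction r)
    case 0
    then show ?case using A by auto
  next
    case (Suc r)
    then obtain B :: "nat set" and g :: "nat \<Rightarrow> real"
      where B: "finite B" "card B = card A - r" "inj_on g B"
      "\<forall>l\<le>card A - r. esym_mean B l g = esym_mean A l f"
      by auto
    have "card B = Suc (card A - Suc r)" using B(2) Suc.prems by (simp add: Suc_diff_Suc)
    then obtain g' where "inj_on g' {..<card A - Suc r}"
      "\<forall>l\<le>card A - Suc r. esym_mean {..<card A - Suc r} l g' = esym_mean B l g"
      using esym_mean_pderiv[OF B(1) _ B(3)] by blast
    then show ?case using B(4) by (intro exI[of _ "{..<card A - Suc r}"] exI[of _ g']) auto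
  qed
  from this[of "card A - j"] show ?thesis using that j by auto
qed

lemma esym_mean_newton_two:
  assumes "finite B" "card B = 2"
  shows "esym_mean B 2 h \<le> (esym_mean B 1 h)\<^sup>2"
proof -
  obtain a b where ab: "B = {a, b}" "a \<noteq> b"
    using assms by (auto simp: card_Suc_eq numeral_2_eq_2)
  have "esym_on {b} 1 h = h b"
    using esym_on_insert[of "{}" b 0 h] by simp
  then have e: "esym_mean B 2 h = h a * h b" "esym_mean B 1 h = (h a + h b) / 2"
    using ab esym_on_insert[of "{b}" a 0 h] esym_on_insert[of "{b}" a 1 h] esym_on_eq_0[of "{b}" 2 h]
    by (simp_all add: esym_mean_def numeral_2_eq_2)
  have "((h a + h b) / 2)\<^sup>2 = h a * h b + ((h a - h b) / 2)\<^sup>2"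
    by (simp add: power2_eq_square field_simps)
  then show ?thesis unfolding e by simp
qed

lemma esym_mean_inverse:
  assumes B: "finite B" and nz: "\<And>i. i \<in> B \<Longrightarrow> g i \<noteq> 0" and l: "l \<le> card B"
  shows "esym_mean B l (\<lambda>i. inverse (g i)) = esym_mean B (card B - l) g / (\<Prod>i\<in>B. g i)"
proof -
  have "(\<Prod>i\<in>B. g i) \<noteq> 0" using B nz by simp
  then show ?thesis
    using esym_on_inverse[OF assms] binomial_symmetric[OF l] unfolding esym_mean_def
    by (simp add: field_simps)
qed

text \<open>Passing to the derivative of \<open>\<Prod>i. (x + f i)\<close> keeps the normalised means, which
  reduces to \<open>j + 1\<close> entries; inverting the entries then turns \<open>E\<^sub>j\<^sub>-\<^sub>1, E\<^sub>j\<close>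
  into \<open>E\<^sub>2, E\<^sub>1\<close> (up to the factor \<open>E\<^sub>j\<^sub>+\<^sub>1\<close>), and a second reduction leaves
  two entries, where the inequality is AM-GM.\<close>
lemma esym_mean_newton_inj:
  fixes f :: "nat \<Rightarrow> real"
  assumes A: "finite A" "inj_on f A" and j: "1 \<le> j" "j < card A"
  shows "esym_mean A (j - 1) f * esym_mean A (Suc j) f \<le> (esym_mean A j f)\<^sup>2"
proof -
  obtain B :: "nat set" and g :: "nat \<Rightarrow> real"
    where B: "finite B" "card B = Suc j" "inj_on g B" "\<forall>l\<le>Suc j. esym_mean B l g = esym_mean A l f"
    using esym_mean_reduce[OF A, where j = "Suc j"] j by auto
  define P where "P = (\<Prod>i\<in>B. g i)"
  have top: "esym_mean B (Suc j) g = P"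
    using B(1,2) esym_on_card[OF B(1), of g] by (simp add: esym_mean_def P_def)
  have "esym_mean B (j - 1) g * P \<le> (esym_mean B j g)\<^sup>2"
  proof (cases "P = 0")
    case False
    then have nz: "\<And>i. i \<in> B \<Longrightarrow> g i \<noteq> 0" using B(1) by (auto simp: P_def)
    have inj_inv: "inj_on (\<lambda>i. inverse (g i)) B" using B(3) by (auto simp: inj_on_def)
    have "2 \<le> card B" using B(2) j by simp
    then obtain C :: "nat set" and h :: "nat \<Rightarrow> real" where C: "finite C" "card C = 2"
        "inj_on h C" "\<forall>l\<le>2. esym_mean C l h = esym_mean B l (\<lambda>i. inverse (g i))"
      by (rule esym_mean_reduce[OF B(1) inj_inv])
    have "esym_mean B 2 (\<lambda>i. inverse (g i)) \<le> (esym_mean B 1 (\<lambda>i. inverse (g i)))\<^sup>2"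
      using esym_mean_newton_two[OF C(1,2), of h] C(4) by simp
    moreover have "card B - 2 = j - 1" "card B - 1 = j" using B(2) by auto
    ultimately have "esym_mean B (j - 1) g / P \<le> (esym_mean B j g / P)\<^sup>2"
      using esym_mean_inverse[OF B(1) nz, where l = 2] esym_mean_inverse[OF B(1) nz, where l = 1] B(2) j
      by (simp add: P_def)
    then show ?thesis using False
      by (simp add: power2_eq_square divide_le_eq field_simps split: if_splits)
  qed (simp add: zero_le_power2)
  then show ?thesis using B(4) top by simp
qed

lemma binomial_log_concave:
  assumes "1 \<le> j" "j < m"
  shows "real (m choose (j - 1)) * real (m choose Suc j) \<le> (real (m choose j))\<^sup>2"
proof -
  obtain i where i: "j = Suc i" using assms by (cases j) auto
  have r1: "real (Suc j) * real (m choose Suc j) = real (m - j) * real (m choose j)"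
    using binomial_absorption[of j m] binomial_absorb_comp[of m j] by (metis of_nat_mult)
  have r2: "real (m - i) * real (m choose i) = real j * real (m choose j)"
    using binomial_absorption[of i m] binomial_absorb_comp[of m i] i by (metis of_nat_mult)
  define P where "P = real (m - i) * real (Suc j)"
  have "real (m choose i) * real (m choose Suc j) * P
      = (real (m - i) * real (m choose i)) * (real (Suc j) * real (m choose Suc j))"
    by (simp only: P_def mult_ac)
  also have "\<dots> = (real (m choose j))\<^sup>2 * (real j * real (m - j))"
    unfolding r1 r2 by (simp only: power2_eq_square mult_ac)
  also have "\<dots> \<le> (real (m choose j))\<^sup>2 * P"
    using assms i by (intro mult_left_mono) (simp_all add: P_def of_nat_diff algebra_simps)
  finally show ?thesis
    using assms i by (simp add: P_def mult_le_cancel_right_pos)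
qed

lemma esym_on_newton_inj:
  fixes f :: "nat \<Rightarrow> real"
  assumes A: "finite A" "inj_on f A" and j: "1 \<le> j"
  shows "esym_on A (j - 1) f * esym_on A (Suc j) f \<le> (esym_on A j f)\<^sup>2"
proof (cases "j < card A")
  case False
  then show ?thesis using A by (simp add: esym_on_eq_0)
next
  case True
  define m where "m = card A"
  have s: "esym_on A l f = real (m choose l) * esym_mean A l f" if "l \<le> m" for l
    using that by (simp add: esym_mean_def m_def)
  define Q where "Q = esym_mean A (j - 1) f * esym_mean A (Suc j) f"
  have L: "esym_on A (j - 1) f * esym_on A (Suc j) f
      = real (m choose (j - 1)) * real (m choose Suc j) * Q"
    using s[of "j - 1"] s[of "Suc j"] True by (simp add: Q_def m_def algebra_simps)
  have R: "(esym_on A j f)\<^sup>2 = (real (m choose j))\<^sup>2 * (esym_mean A j f)\<^sup>2"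
    using s[of j] True by (simp add: m_def power_mult_distrib)
  have binom: "real (m choose (j - 1)) * real (m choose Suc j) \<le> (real (m choose j))\<^sup>2"
    using binomial_log_concave[OF j] True by (simp add: m_def)
  show ?thesis
  proof (cases "Q \<le> 0")
    case True
    then show ?thesis unfolding L R
      by (meson order_trans mult_nonneg_nonpos zero_le_mult_iff zero_le_power2 of_nat_0_le_iff)
  next
    case False
    have "real (m choose (j - 1)) * real (m choose Suc j) * Q \<le> (real (m choose j))\<^sup>2 * Q"
      using binom False by (intro mult_right_mono) auto
    also have "\<dots> \<le> (real (m choose j))\<^sup>2 * (esym_mean A j f)\<^sup>2"
      using esym_mean_newton_inj[OF A j True] by (intro mult_left_mono) (auto simp: Q_def)
    finally show ?thesis unfolding L R .
  qed
qed

text \<open>Newton's inequality for arbitrary real entries follows from the case of distinct entries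
  by perturbing \<open>f\<close> to \<open>f + t id\<close>, which is injective on \<open>A\<close> for all but finitely many \<open>t\<close>.\<close>
lemma esym_on_newton:
  fixes f :: "nat \<Rightarrow> real"
  assumes A: "finite A" and j: "1 \<le> j"
  shows "esym_on A (j - 1) f * esym_on A (Suc j) f \<le> (esym_on A j f)\<^sup>2"
proof (rule ccontr)
  define ft where "ft = (\<lambda>t i. f i + t * real i)"
  define F where "F = (\<lambda>t. (esym_on A j (ft t))\<^sup>2 - esym_on A (j - 1) (ft t) * esym_on A (Suc j) (ft t))"
  assume "\<not> ?thesis"
  then have "F 0 < 0" by (simp add: F_def ft_def)
  moreover have "isCont F 0"
    unfolding F_def ft_def esym_on_def by (intro continuous_intros)
  ultimately have "eventually (\<lambda>t. F t < 0) (at 0)"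
    by (metis isCont_def order_tendstoD(2))
  then obtain d where d: "d > 0" "\<And>t. t \<noteq> 0 \<Longrightarrow> dist t 0 < d \<Longrightarrow> F t < 0"
    unfolding eventually_at by blast
  define T where "T = (\<lambda>(a, b). (f b - f a) / (real a - real b)) ` (A \<times> A)"
  have "finite T" unfolding T_def using A by simp
  moreover have "infinite {0<..<d}" using d by simp
  ultimately obtain t where t: "t \<in> {0<..<d}" "t \<notin> T"
    by (meson finite_subset subsetI)
  have "inj_on (ft t) A"
  proof (rule inj_onI, rule ccontr)
    fix a b assume ab: "a \<in> A" "b \<in> A" "ft t a = ft t b" "a \<noteq> b"
    then have "t = (f b - f a) / (real a - real b)" by (simp add: ft_def field_simps)
    then show False using ab t unfolding T_def by force
  qed
  then have "F t \<ge> 0" using esym_on_newton_inj[OF A _ j] by (simp add: F_def)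
  moreover have "F t < 0" using d t by auto
  ultimately show False by simp
qed

section \<open>The cones \<open>\<Gamma>\<^sub>k\<close>\<close>

lemma pos_of_newton:
  fixes a b c x :: real
  assumes a: "0 < a" and newton: "a * c \<le> b\<^sup>2" and xa: "0 < x * a + b" and xb: "0 < x * b + c"
  shows "0 < b"
proof (rule ccontr)
  assume "\<not> 0 < b"
  then have b: "b \<le> 0" by simp
  have x: "0 < x"
  proof (rule ccontr)
    assume "\<not> 0 < x"
    then have "x * a \<le> 0" using a by (simp add: mult_nonpos_nonneg)
    then show False using xa b by linarith
  qed
  then have "x * b \<le> 0" using b by (simp add: mult_nonneg_nonpos)
  then have "0 < c" using xb by linarith
  then have "0 < b\<^sup>2" using mult_pos_pos[OF a, of c] newton by linarith
  then have "0 < - b" using b by (cases "b = 0") auto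
  moreover have "- b < x * a" using xa by linarith
  ultimately have "(- b) * (- b) < x * a * (- b)" by (rule mult_strict_right_mono[rotated])
  also have "\<dots> = a * (- (x * b))" by simp
  also have "\<dots> < a * c" using xb a by (intro mult_strict_left_mono) auto
  finally show False using newton by (simp add: power2_eq_square)
qed

text \<open>In the induction step,
  Newton's inequality for the remaining entries is what rules out \<open>\<sigma>\<^sub>k \<le> 0\<close>.\<close>
lemma esym_on_remove_pos:
  fixes f :: "nat \<Rightarrow> real"
  assumes A: "finite A" "i \<in> A"
  shows "\<forall>j. 1 \<le> j \<and> j \<le> k \<longrightarrow> 0 < esym_on A j f
    \<Longrightarrow> \<forall>j. 1 \<le> j \<and> j < k \<longrightarrow> 0 < esym_on (A - {i}) j f"
proof (induction k)
  case (Suc k)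
  define A' where "A' = A - {i}"
  have A': "finite A'" "i \<notin> A'" "A = insert i A'" using A by (auto simp: A'_def)
  have IH: "\<forall>j. 1 \<le> j \<and> j < k \<longrightarrow> 0 < esym_on A' j f" using Suc by (simp add: A'_def)
  have "0 < esym_on A' k f" if "1 \<le> k"
  proof (rule pos_of_newton)
    show "0 < esym_on A' (k - 1) f" using IH A' that by (cases "k = 1") auto
    show "esym_on A' (k - 1) f * esym_on A' (Suc k) f \<le> (esym_on A' k f)\<^sup>2"
      using esym_on_newton[OF A'(1) that] .
    show "0 < f i * esym_on A' (k - 1) f + esym_on A' k f"
      using Suc.prems[rule_format, of k] that esym_on_insert[OF A'(1,2), of "k - 1" f] A'(3) by simp
    show "0 < f i * esym_on A' k f + esym_on A' (Suc k) f"
      using Suc.prems[rule_format, of "Suc k"] esym_on_insert[OF A'(1,2), of k f] A'(3) by simp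
  qed
  then show ?case using IH by (auto simp: A'_def less_Suc_eq)
qed simp

lemma esym_on_bound_above:
  fixes f :: "nat \<Rightarrow> real"
  assumes A: "finite A" and k: "1 \<le> k" and pos: "\<forall>j. 1 \<le> j \<and> j \<le> k \<longrightarrow> 0 < esym_on A j f"
    and le: "\<And>i. i \<in> A \<Longrightarrow> f i \<le> c"
  shows "real k * esym_on A k f \<le> c * ((real (card A) - real (k - 1)) * esym_on A (k - 1) f)"
proof -
  have nonneg: "0 \<le> esym_on (A - {i}) (k - 1) f" if "i \<in> A" for i
  proof (cases "k = 1")
    case False
    then have "1 \<le> k - 1 \<and> k - 1 < k" using k by auto
    then show ?thesis using esym_on_remove_pos[OF A that pos] by (simp add: less_imp_le)
  qed (use A in simp)
  have "real k * esym_on A k f = (\<Sum>i\<in>A. f i * esym_on (A - {i}) (k - 1) f)"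
    using sum_mult_esym_on_remove[OF A, of f "k - 1"] k by simp
  also have "\<dots> \<le> (\<Sum>i\<in>A. c * esym_on (A - {i}) (k - 1) f)"
    using nonneg le by (intro sum_mono mult_right_mono) auto
  also have "\<dots> = c * ((real (card A) - real (k - 1)) * esym_on A (k - 1) f)"
    using sum_esym_on_remove[OF A, of "k - 1" f] by (simp flip: sum_distrib_left)
  finally show ?thesis .
qed

lemma esym_on_bound_below:
  fixes f :: "'a \<Rightarrow> real"
  assumes A: "finite A" and k: "1 \<le> k" and c: "0 \<le> c" and ge: "\<And>i. i \<in> A \<Longrightarrow> c \<le> f i"
  shows "c * ((real (card A) - real (k - 1)) * esym_on A (k - 1) f) \<le> real k * esym_on A k f"
proof -
  have nonneg: "0 \<le> esym_on (A - {i}) (k - 1) f" for i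
    using ge c by (intro esym_on_nonneg) force
  have "c * ((real (card A) - real (k - 1)) * esym_on A (k - 1) f)
      = (\<Sum>i\<in>A. c * esym_on (A - {i}) (k - 1) f)"
    using sum_esym_on_remove[OF A, of "k - 1" f] by (simp flip: sum_distrib_left)
  also have "\<dots> \<le> (\<Sum>i\<in>A. f i * esym_on (A - {i}) (k - 1) f)"
    using nonneg ge by (intro sum_mono mult_right_mono) auto
  also have "\<dots> = real k * esym_on A k f"
    using sum_mult_esym_on_remove[OF A, of f "k - 1"] k by simp
  finally show ?thesis .
qed

lemma esym_ones: "esym n j (\<lambda>_. 1) = real (n choose j)"
  using esym_on_const[of "{..<n}" j 1] by (simp add: esym_eq_esym_on)

lemma esym_ones_quotient:
  assumes "1 \<le> k" "k \<le> n"
  shows "esym n k (\<lambda>_. 1) / esym n (k - 1) (\<lambda>_. 1) = (real n - real (k - 1)) / real k"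
proof -
  obtain i where i: "k = Suc i" using assms by (cases k) auto
  have "real (Suc i) * real (n choose Suc i) = real (n - i) * real (n choose i)"
    using binomial_absorption[of i n] binomial_absorb_comp[of n i] by (metis of_nat_mult)
  moreover have "real (n choose i) > 0" using assms i by simp
  ultimately show ?thesis using i assms by (simp add: esym_ones field_simps of_nat_diff)
qed

lemma esym_ones_quotient_pos:
  assumes "1 \<le> k" "k \<le> n"
  shows "0 < esym n k (\<lambda>_. 1) / esym n (k - 1) (\<lambda>_. 1)"
  unfolding esym_ones_quotient[OF assms] using assms by simp

lemma Gamma_cone_esym_pos: "\<kappa> \<in> Gamma_cone n m \<Longrightarrow> j \<le> m \<Longrightarrow> 0 < esym n j \<kappa>"
  by (cases "j = 0") (auto simp: Gamma_cone_def esym_eq_esym_on)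

lemma esym_quotient_ge:
  assumes k: "1 \<le> k" "k \<le> n" and c: "0 < c" and ge: "\<forall>i<n. c \<le> \<kappa> i"
  shows "c * (esym n k (\<lambda>_. 1) / esym n (k - 1) (\<lambda>_. 1)) \<le> esym n k \<kappa> / esym n (k - 1) \<kappa>"
proof -
  have pos: "0 < esym n (k - 1) \<kappa>"
    unfolding esym_eq_esym_on using k c ge by (intro esym_on_pos) force+
  have "c * ((real n - real (k - 1)) * esym n (k - 1) \<kappa>) \<le> real k * esym n k \<kappa>"
    using esym_on_bound_below[of "{..<n}" k c \<kappa>] k c ge by (simp add: esym_eq_esym_on)
  moreover have "0 < real k" using k by simp
  ultimately show ?thesis
    unfolding esym_ones_quotient[OF k] using pos by (simp add: field_simps)
qed

lemma esym_quotient_le: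
  assumes k: "1 \<le> k" "k \<le> n" and cone: "\<kappa> \<in> Gamma_cone n (k - 1)" and pos: "0 < esym n k \<kappa>"
    and le: "\<forall>i<n. \<kappa> i \<le> c"
  shows "esym n k \<kappa> / esym n (k - 1) \<kappa> \<le> c * (esym n k (\<lambda>_. 1) / esym n (k - 1) (\<lambda>_. 1))"
proof -
  have "0 < esym_on {..<n} j \<kappa>" if "1 \<le> j" "j \<le> k" for j
    using Gamma_cone_esym_pos[OF cone, of j] pos that by (cases "j = k") (auto simp: esym_eq_esym_on)
  then have "real k * esym n k \<kappa> \<le> c * ((real n - real (k - 1)) * esym n (k - 1) \<kappa>)"
    using esym_on_bound_above[of "{..<n}" k \<kappa> c] k le by (simp add: esym_eq_esym_on)
  moreover have "0 < real k" using k by simp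
  ultimately show ?thesis
    unfolding esym_ones_quotient[OF k]
    using Gamma_cone_esym_pos[OF cone, of "k - 1"] by (simp add: field_simps)
qed

section \<open>Derivatives at extrema and on level sets\<close>

lemma smooth_on_iter_dirD_differentiable:
  assumes "smooth_on U f" "open U" "y \<in> U"
  shows "iter_dirD f us differentiable (at y)"
proof -
  have "iter_dirD f us differentiable (at y within U)"
    using assms(1,3) unfolding smooth_on_def differentiable_on_def by blast
  then show ?thesis using at_within_open[OF assms(3,2)] by simp
qed

lemma smooth_on_has_derivative:
  assumes "smooth_on U f" "open U" "y \<in> U"
  shows "(f has_derivative frechet_derivative f (at y)) (at y)"
    and "(dirD f u has_derivative frechet_derivative (dirD f u) (at y)) (at y)"
  using smooth_on_iter_dirD_differentiable[OF assms, of "[]"]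
    smooth_on_iter_dirD_differentiable[OF assms, of "[u]"]
  by (simp_all add: frechet_derivative_works)

lemma smooth_on_const: "smooth_on U (\<lambda>_. c)"
proof -
  have "\<exists>c'. iter_dirD (\<lambda>_. c) us = (\<lambda>_. c')" for us :: "'a list"
    by (induction us) (auto simp: dirD_def)
  then show ?thesis unfolding smooth_on_def by (metis differentiable_on_const)
qed

lemma has_derivative_along_line:
  fixes g :: "'a::real_normed_vector \<Rightarrow> real"
  assumes "(g has_derivative D) (at (X + t *\<^sub>R u))"
  shows "((\<lambda>t. g (X + t *\<^sub>R u)) has_real_derivative D u) (at t)"
proof -
  have "((\<lambda>t. X + t *\<^sub>R u) has_derivative (\<lambda>h. h *\<^sub>R u)) (at t)"
    by (auto intro!: derivative_eq_intros)
  from has_derivative_compose[OF this assms] show ?thesis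
    using linear_scale[OF has_derivative_linear[OF assms]]
    by (intro has_derivative_imp_has_field_derivative) auto
qed

lemma smooth_extremum_derivative_zero:
  fixes f :: "'a::real_normed_vector \<Rightarrow> real"
  assumes sm: "smooth_on U f" and U: "open U" "X \<in> U" and s: "s \<noteq> 0"
    and ext: "\<forall>y\<in>U. s * f y \<le> s * f X"
  shows "frechet_derivative f (at X) = (\<lambda>h. 0)"
proof -
  have "(\<forall>y\<in>U. f y \<le> f X) \<or> (\<forall>y\<in>U. f X \<le> f y)"
    using s ext by (cases "0 < s") (auto simp: mult_le_cancel_left)
  then show ?thesis
    using differential_zero_maxmin[OF U(2,1) smooth_on_has_derivative(1)[OF sm U(1,2)]] by blast
qed

lemma critical_point_increases_right:
  fixes \<phi> \<psi> :: "real \<Rightarrow> real"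
  assumes \<delta>: "0 < \<delta>" and d\<phi>: "\<And>t. 0 \<le> t \<Longrightarrow> t < \<delta> \<Longrightarrow> (\<phi> has_real_derivative \<psi> t) (at t)"
    and \<psi>0: "\<psi> 0 = 0" and d\<psi>: "(\<psi> has_real_derivative c) (at 0)" and c: "0 < c"
  obtains t where "0 < t" "t < \<delta>" "\<phi> 0 < \<phi> t"
proof -
  obtain d where d: "0 < d" "\<And>h. 0 < h \<Longrightarrow> h < d \<Longrightarrow> \<psi> 0 < \<psi> (0 + h)"
    using DERIV_pos_inc_right[OF d\<psi> c] by blast
  define t where "t = min (d / 2) (\<delta> / 2)"
  have t: "0 < t" "t < d" "t < \<delta>" using d \<delta> by (auto simp: t_def)
  obtain z where z: "0 < z" "z < t" "\<phi> t - \<phi> 0 = (t - 0) * \<psi> z"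
    using MVT2[OF t(1), of \<phi> \<psi>] d\<phi> t by force
  have "0 < \<psi> z" using d(2)[of z] z t \<psi>0 by simp
  then have "\<phi> 0 < \<phi> t" using z t by (simp add: algebra_simps)
  then show thesis using that t by blast
qed

lemma smooth_extremum_second_derivative:
  fixes f :: "'a::real_normed_vector \<Rightarrow> real"
  assumes sm: "smooth_on U f" and U: "open U" "X \<in> U" and s: "s \<noteq> 0"
    and ext: "\<forall>y\<in>U. s * f y \<le> s * f X"
  shows "s * frechet_derivative (dirD f u) (at X) u \<le> 0"
proof (rule ccontr)
  assume pos: "\<not> ?thesis"
  obtain \<delta> where \<delta>: "0 < \<delta>" "ball X \<delta> \<subseteq> U" using U open_contains_ball by blast
  define \<epsilon> where "\<epsilon> = \<delta> / (norm u + 1)"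
  have "0 < norm u + 1" by (simp add: add_nonneg_pos)
  then have \<epsilon>: "0 < \<epsilon>" using \<delta> by (simp add: \<epsilon>_def)
  have line: "X + t *\<^sub>R u \<in> U" if "0 \<le> t" "t < \<epsilon>" for t
  proof -
    have "t * norm u \<le> t * (norm u + 1)" using that by (simp add: mult_left_mono)
    also have "\<dots> < \<delta>" using that \<open>0 < norm u + 1\<close> by (simp add: \<epsilon>_def pos_less_divide_eq)
    finally show ?thesis using \<delta>(2) that by (auto simp: dist_norm)
  qed
  define \<phi> where "\<phi> = (\<lambda>t. s * f (X + t *\<^sub>R u))"
  define \<psi> where "\<psi> = (\<lambda>t. s * dirD f u (X + t *\<^sub>R u))"
  have "(\<phi> has_real_derivative \<psi> t) (at t)" if "0 \<le> t" "t < \<epsilon>" for t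
    unfolding \<phi>_def \<psi>_def dirD_def
    by (intro DERIV_cmult has_derivative_along_line smooth_on_has_derivative(1)[OF sm U(1)] line[OF that])
  moreover have "\<psi> 0 = 0"
    using smooth_extremum_derivative_zero[OF assms] by (simp add: \<psi>_def dirD_def)
  moreover have "(\<psi> has_real_derivative s * frechet_derivative (dirD f u) (at X) u) (at 0)"
    unfolding \<psi>_def
    by (intro DERIV_cmult has_derivative_along_line) (use smooth_on_has_derivative(2)[OF sm U] in simp)
  moreover have "0 < s * frechet_derivative (dirD f u) (at X) u" using pos by simp
  ultimately obtain t where "0 < t" "t < \<epsilon>" "\<phi> 0 < \<phi> t"
    using critical_point_increases_right[OF \<epsilon>] by blast
  then show False using ext[rule_format, OF line[of t]] by (simp add: \<phi>_def)
qed

lemma has_derivative_norm_inner: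
  fixes X :: "'a::real_inner"
  assumes "X \<noteq> 0"
  shows "(norm has_derivative (\<lambda>h. (X \<bullet> h) / norm X)) (at X)"
proof -
  have "(\<lambda>h. h \<bullet> sgn X) = (\<lambda>h. (X \<bullet> h) / norm X)"
    by (auto simp: sgn_div_norm inner_commute divide_inverse)
  then show ?thesis using has_derivative_norm[OF assms] by simp
qed

lemma dirD_norm:
  fixes y :: "'a::real_inner"
  shows "y \<noteq> 0 \<Longrightarrow> dirD norm u y = (y \<bullet> u) / norm y"
  unfolding dirD_def using frechet_derivative_at has_derivative_norm_inner by metis

lemma has_derivative_dirD_norm:
  fixes X :: "'a::real_inner"
  assumes X: "X \<noteq> 0" and u: "X \<bullet> u = 0"
  shows "(dirD norm u has_derivative (\<lambda>v. (u \<bullet> v) / norm X)) (at X)"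
proof -
  have "((\<lambda>y. y \<bullet> u) has_derivative (\<lambda>h. h \<bullet> u)) (at X)"
    by (rule bounded_linear_imp_has_derivative) (rule bounded_linear_inner_left)
  from has_derivative_divide[OF this has_derivative_norm_inner[OF X]]
  have "((\<lambda>y. (y \<bullet> u) / norm y) has_derivative (\<lambda>v. (u \<bullet> v) / norm X)) (at X)"
    using X u by (simp add: inner_commute)
  then show ?thesis
    by (rule has_derivative_transform_within_open[of _ _ _ _ "- {0}"])
      (use X in \<open>auto simp: dirD_norm\<close>)
qed

text \<open>Where the radial function is critical, the level set of \<open>level_fun\<close> is tangent to the
  sphere through \<open>X\<close>, its unit normal is \<open>X / |X|\<close>, and the Hessian of the radial function
  corrects the second fundamental form \<open>1 / |X|\<close> of that sphere.\<close>
lemma level_fun_at_critical_point: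
  fixes X :: "real^'m" and rho :: "real^'m \<Rightarrow> real"
  assumes sm: "smooth_on (- {0}) (radial_ext rho)" and X: "X \<noteq> 0"
    and crit: "frechet_derivative (radial_ext rho) (at X) = (\<lambda>h. 0)"
  shows "frechet_derivative (level_fun rho) (at X) h = (X \<bullet> h) / norm X"
    and "X \<bullet> u = 0 \<Longrightarrow> second_ff (level_fun rho) X u v
            = (u \<bullet> v) / norm X - frechet_derivative (dirD (radial_ext rho) u) (at X) v"
proof -
  define R where "R = radial_ext rho"
  have U: "open (- {0 :: real^'m})" by auto
  have dL: "(level_fun rho has_derivative
      (\<lambda>h. (y \<bullet> h) / norm y - frechet_derivative R (at y) h)) (at y)" if "y \<noteq> 0" for y
    unfolding level_fun_def[abs_def] R_def
    by (intro has_derivative_diff has_derivative_norm_inner that smooth_on_has_derivative(1)[OF sm U])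
      (use that in auto)
  have fL: "frechet_derivative (level_fun rho) (at y) h
      = (y \<bullet> h) / norm y - frechet_derivative R (at y) h" if "y \<noteq> 0" for y h
    using frechet_derivative_at[OF dL[OF that]] by metis
  show fLX: "frechet_derivative (level_fun rho) (at X) h = (X \<bullet> h) / norm X" for h
    using fL[OF X] crit by (simp add: R_def)
  have "gradient_vec (level_fun rho) X = X /\<^sub>R norm X"
    unfolding gradient_vec_def fLX by (simp add: vec_eq_iff inner_axis divide_inverse)
  then have grad: "norm (gradient_vec (level_fun rho) X) = 1" using X by simp
  assume u: "X \<bullet> u = 0"
  have X0: "X \<in> - {0}" using X by simp
  have "dirD norm u y - dirD R u y = dirD (level_fun rho) u y" if "y \<in> - {0}" for y
    using fL[of y u] dirD_norm[of y u] that unfolding dirD_def by simp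
  from has_derivative_transform_within_open[OF has_derivative_diff[OF has_derivative_dirD_norm[OF X u]
        smooth_on_has_derivative(2)[OF sm[folded R_def] U X0]] U X0 this]
  have "(dirD (level_fun rho) u has_derivative
      (\<lambda>v. (u \<bullet> v) / norm X - frechet_derivative (dirD R u) (at X) v)) (at X)" .
  from fun_cong[OF frechet_derivative_at[OF this], of v]
  show "second_ff (level_fun rho) X u v
      = (u \<bullet> v) / norm X - frechet_derivative (dirD (radial_ext rho) u) (at X) v"
    unfolding second_ff_def grad R_def by simp
qed

section \<open>Round spheres and the maximum principle\<close>

lemma decreasing_of_negative_derivative:
  fixes f :: "real \<Rightarrow> real"
  assumes "\<forall>t>0. \<exists>D. (f has_real_derivative D) (at t) \<and> D < 0" "0 < s" "s < t"
  shows "f t < f s"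
  using DERIV_neg_imp_decreasing[OF assms(3), of f] assms(1,2) by force

lemma ex1_crossing_of_decreasing:
  fixes f :: "real \<Rightarrow> real"
  assumes ab: "0 < a" "a < b" and fa: "y < f a" and fb: "f b < y"
    and dec: "\<forall>t>0. \<exists>D. (f has_real_derivative D) (at t) \<and> D < 0"
  shows "\<exists>!t. 0 < t \<and> f t = y"
proof (rule ex_ex1I)
  have "isCont f t" if "t \<in> {a..b}" for t
    using dec that ab by (meson DERIV_isCont atLeastAtMost_iff less_le_trans)
  then have "continuous_on {a..b} f" by (blast intro: continuous_at_imp_continuous_on)
  then obtain t where "a \<le> t" "t \<le> b" "f t = y"
    using IVT2'[of f b y a] ab fa fb by force
  moreover have "0 < t" using \<open>a \<le> t\<close> ab by simp
  ultimately show "\<exists>t. 0 < t \<and> f t = y" by blast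
next
  fix s t assume "0 < s \<and> f s = y" "0 < t \<and> f t = y"
  then show "s = t"
    using decreasing_of_negative_derivative[OF dec, of s t]
      decreasing_of_negative_derivative[OF dec, of t s] by (cases s t rule: linorder_cases) auto
qed

lemma hyperplane_orthonormal_frame:
  fixes X :: "real^'m"
  assumes X: "X \<noteq> 0" and dim: "CARD('m) = n + 1"
  obtains e :: "nat \<Rightarrow> real^'m"
  where "\<forall>i<n. \<forall>j<n. e i \<bullet> e j = (if i = j then 1 else 0)" "\<forall>i<n. X \<bullet> e i = 0"
proof -
  define S where "S = {y::real^'m. X \<bullet> y = 0}"
  have "subspace S" unfolding S_def by (rule subspace_hyperplane)
  then obtain B where B: "B \<subseteq> S" "pairwise orthogonal B" "\<And>x. x \<in> B \<Longrightarrow> norm x = 1"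
      "independent B" "card B = dim S"
    using orthonormal_basis_subspace by metis
  have cB: "card B = n" using B(5) dim_hyperplane[OF X] dim by (simp add: S_def)
  obtain e where e: "bij_betw e {0..<n} B"
    using ex_bij_betw_nat_finite[OF independent_imp_finite[OF B(4)]] cB by metis
  show ?thesis
  proof (rule that[of e])
    show "\<forall>i<n. \<forall>j<n. e i \<bullet> e j = (if i = j then 1 else 0)"
    proof (intro allI impI)
      fix i j assume ij: "i < n" "j < n"
      then have "e i \<in> B" "e j \<in> B" "e i = e j \<longleftrightarrow> i = j"
        using e by (auto simp: bij_betw_def inj_on_eq_iff)
      then show "e i \<bullet> e j = (if i = j then 1 else 0)"
        using B(2,3) by (auto simp: dot_square_norm pairwise_def orthogonal_def)
    qed
    show "\<forall>i<n. X \<bullet> e i = 0"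
      using e B(1) unfolding bij_betw_def S_def by (auto simp: image_subset_iff)
  qed
qed

lemma admissible_radial_pos: "admissible_radial rho \<Longrightarrow> x \<in> sphere 0 1 \<Longrightarrow> 0 < rho x"
  by (simp add: admissible_radial_def)

lemma admissible_radial_continuous:
  fixes rho :: "real^'m \<Rightarrow> real"
  assumes "admissible_radial rho"
  shows "continuous_on (sphere 0 1) rho"
proof -
  have "iter_dirD (radial_ext rho) [] differentiable_on (- {0})"
    using assms unfolding admissible_radial_def smooth_on_def by blast
  then have "continuous_on (sphere 0 1) (radial_ext rho)"
    by (auto intro: continuous_on_subset differentiable_imp_continuous_on)
  then show ?thesis by (rule continuous_on_eq) (simp add: radial_ext_def)
qed

lemma admissible_radial_const: "0 < rho0 \<Longrightarrow> admissible_radial (\<lambda>_ :: real^'m. rho0)"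
  unfolding admissible_radial_def radial_ext_def by (simp add: smooth_on_const)

lemma star_hypersurface_eq_sphere_iff:
  fixes rho :: "real^'m \<Rightarrow> real"
  assumes adm: "admissible_radial rho" and r0: "0 < rho0"
  shows "star_hypersurface rho = sphere 0 rho0 \<longleftrightarrow> (\<forall>x\<in>sphere 0 1. rho x = rho0)"
proof
  assume st: "star_hypersurface rho = sphere 0 rho0"
  show "\<forall>x\<in>sphere 0 1. rho x = rho0"
  proof
    fix x :: "real^'m" assume x: "x \<in> sphere 0 1"
    then have "rho x *\<^sub>R x \<in> sphere 0 rho0" using st unfolding star_hypersurface_def by blast
    then show "rho x = rho0" using x admissible_radial_pos[OF adm x] by simp
  qed
next
  assume cst: "\<forall>x\<in>sphere 0 1. rho x = rho0"
  have "y \<in> star_hypersurface rho" if y: "y \<in> sphere 0 rho0" for y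
  proof -
    have x: "y /\<^sub>R rho0 \<in> sphere 0 1" using y r0 by simp
    then have "y = rho (y /\<^sub>R rho0) *\<^sub>R (y /\<^sub>R rho0)" using cst r0 by simp
    then show ?thesis using x unfolding star_hypersurface_def by blast
  qed
  then show "star_hypersurface rho = sphere 0 rho0"
    using cst r0 unfolding star_hypersurface_def by auto
qed

lemma principal_curvatures_round:
  fixes rho :: "real^'m \<Rightarrow> real"
  assumes dim: "CARD('m) = n + 1" and adm: "admissible_radial rho"
    and cst: "\<forall>x\<in>sphere 0 1. rho x = rho0" and X: "X \<in> star_hypersurface rho"
  shows "principal_curvatures n rho X (\<lambda>_. 1 / rho0)"
proof -
  obtain x where x: "x \<in> sphere 0 1" "X = rho0 *\<^sub>R x"
    using X cst unfolding star_hypersurface_def by auto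
  have "0 < rho0" using admissible_radial_pos[OF adm x(1)] cst x(1) by simp
  then have nX: "norm X = rho0" and X0: "X \<in> - {0}" using x by auto
  define R where "R = radial_ext rho"
  have U: "open (- {0 :: real^'m})" by auto
  have "(R has_derivative (\<lambda>h. 0)) (at y)" if "y \<in> - {0}" for y
    by (rule has_derivative_transform_within_open[OF has_derivative_const U that])
      (use cst in \<open>simp add: R_def radial_ext_def\<close>)
  then have dR: "frechet_derivative R (at y) = (\<lambda>h. 0)" if "y \<in> - {0}" for y
    using that by (metis frechet_derivative_at)
  have "(dirD R u has_derivative (\<lambda>h. 0)) (at X)" for u
    by (rule has_derivative_transform_within_open[OF has_derivative_const U X0])
      (simp add: dirD_def dR)
  then have D2: "frechet_derivative (dirD R u) (at X) v = 0" for u v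
    by (metis frechet_derivative_at)
  have sm: "smooth_on (- {0}) (radial_ext rho)" using adm by (simp add: admissible_radial_def)
  note F = level_fun_at_critical_point[OF sm _ dR[OF X0, unfolded R_def]]
  obtain e where e: "\<forall>i<n. \<forall>j<n. e i \<bullet> e j = (if i = j then 1 else 0)" "\<forall>i<n. X \<bullet> e i = 0"
    using hyperplane_orthonormal_frame[of X n] X0 dim by auto
  show ?thesis
    unfolding principal_curvatures_def
    using e F D2[unfolded R_def] X0 nX by (intro exI[of _ e]) auto
qed

lemma solves_eq_round:
  fixes rho :: "real^'m \<Rightarrow> real"
  assumes dim: "CARD('m) = n + 1" and k: "1 \<le> k" "k \<le> n"
    and adm: "admissible_radial rho" and cst: "\<forall>x\<in>sphere 0 1. rho x = rho0"
    and r0: "0 < rho0" "phi rho0 = 1"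
  shows "solves_eq n k phi rho"
  unfolding solves_eq_def
proof
  fix X assume X: "X \<in> star_hypersurface rho"
  then have nX: "norm X = rho0" using cst r0 unfolding star_hypersurface_def by auto
  have hom: "esym n j (\<lambda>_. 1 / rho0) = (1 / rho0) ^ j * esym n j (\<lambda>_. 1)" for j
    using esym_on_const[of "{..<n}" j "1 / rho0"] esym_ones[of n j] by (simp add: esym_eq_esym_on)
  obtain i where i: "k = Suc i" using k by (cases k) auto
  have "(\<lambda>_. 1 / rho0) \<in> Gamma_cone n (k - 1)"
    using k r0 by (auto simp: Gamma_cone_def hom esym_ones)
  moreover have "esym n k (\<lambda>_. 1 / rho0) / esym n (k - 1) (\<lambda>_. 1 / rho0)
      = 1 / rho0 * (esym n k (\<lambda>_. 1) / esym n (k - 1) (\<lambda>_. 1))"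
    using r0 by (simp add: hom i)
  ultimately show "\<exists>\<kappa>. principal_curvatures n rho X \<kappa> \<and> \<kappa> \<in> Gamma_cone n (k - 1) \<and>
      esym n k \<kappa> / esym n (k - 1) \<kappa>
        - phi (norm X) * (esym n k (\<lambda>_. 1) / esym n (k - 1) (\<lambda>_. 1)) * (1 / norm X) = 0"
    using principal_curvatures_round[OF dim adm cst X] nX r0 by auto
qed

lemma solves_eqD:
  fixes rho :: "real^'m \<Rightarrow> real"
  assumes sol: "solves_eq n k phi rho" and x: "x \<in> sphere 0 1" and pos: "0 < rho x"
  obtains \<kappa> where "principal_curvatures n rho (rho x *\<^sub>R x) \<kappa>" "\<kappa> \<in> Gamma_cone n (k - 1)"
    "esym n k \<kappa> / esym n (k - 1) \<kappa>
      = phi (rho x) / rho x * (esym n k (\<lambda>_. 1) / esym n (k - 1) (\<lambda>_. 1))"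
proof -
  have "rho x *\<^sub>R x \<in> star_hypersurface rho" using x unfolding star_hypersurface_def by blast
  moreover have "norm (rho x *\<^sub>R x) = rho x" using x pos by simp
  ultimately show ?thesis using sol that unfolding solves_eq_def by fastforce
qed

text \<open>At an extremum of \<open>rho\<close> the radial function is critical and its Hessian is
  semidefinite, so every principal curvature lies on one side of the curvature \<open>1 / rho x\<close>
  of the touching sphere (\<open>s = 1\<close>: maximum, \<open>s = -1\<close>: minimum).\<close>
lemma principal_curvature_bound_at_extremum:
  fixes rho :: "real^'m \<Rightarrow> real"
  assumes adm: "admissible_radial rho" and x: "x \<in> sphere 0 1" and s: "s \<noteq> 0"
    and ext: "\<forall>y\<in>sphere 0 1. s * rho y \<le> s * rho x"
    and pc: "principal_curvatures n rho (rho x *\<^sub>R x) \<kappa>" and i: "i < n"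
  shows "s / rho x \<le> s * \<kappa> i"
proof -
  define X where "X = rho x *\<^sub>R x"
  define R where "R = radial_ext rho"
  have pos: "0 < rho x" using admissible_radial_pos[OF adm x] .
  then have nX: "norm X = rho x" and X0: "X \<in> - {0}" using x by (auto simp: X_def)
  have sm: "smooth_on (- {0}) R" using adm by (simp add: admissible_radial_def R_def)
  have U: "open (- {0 :: real^'m})" by auto
  have "\<forall>y\<in>- {0}. s * R y \<le> s * R X"
    using ext pos x by (simp add: R_def X_def radial_ext_def)
  note crit = smooth_extremum_derivative_zero[OF sm U X0 s this]
    and second = smooth_extremum_second_derivative[OF sm U X0 s this]
  obtain e where e: "\<forall>i<n. \<forall>j<n. e i \<bullet> e j = (if i = j then 1 else 0)"
      "\<forall>i<n. frechet_derivative (level_fun rho) (at X) (e i) = 0"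
      "\<forall>i<n. \<forall>j<n. second_ff (level_fun rho) X (e i) (e j) = (if i = j then \<kappa> i else 0)"
    using pc unfolding principal_curvatures_def X_def by blast
  note F = level_fun_at_critical_point[OF sm[unfolded R_def] _ crit[unfolded R_def]]
  have "X \<bullet> e i = 0" using e(2) i F(1)[of "e i"] X0 by simp
  then have "\<kappa> i = 1 / rho x - frechet_derivative (dirD R (e i)) (at X) (e i)"
    using e(1,3) i F(2)[of "e i" "e i"] X0 nX by (simp add: R_def)
  then show ?thesis using second[of "e i"] by (simp add: right_diff_distrib)
qed

lemma solves_eq_max_radius:
  fixes rho :: "real^'m \<Rightarrow> real"
  assumes k: "1 \<le> k" "k \<le> n" and adm: "admissible_radial rho" and sol: "solves_eq n k phi rho"
    and x: "x \<in> sphere 0 1" and max: "\<forall>y\<in>sphere 0 1. rho y \<le> rho x"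
  shows "1 \<le> phi (rho x)"
proof -
  have pos: "0 < rho x" using admissible_radial_pos[OF adm x] .
  obtain \<kappa> where pc: "principal_curvatures n rho (rho x *\<^sub>R x) \<kappa>"
    and eq: "esym n k \<kappa> / esym n (k - 1) \<kappa>
      = phi (rho x) / rho x * (esym n k (\<lambda>_. 1) / esym n (k - 1) (\<lambda>_. 1))"
    using solves_eqD[OF sol x pos] by blast
  have "\<forall>i<n. 1 / rho x \<le> \<kappa> i"
    using principal_curvature_bound_at_extremum[OF adm x _ _ pc, of 1] max by simp
  then have "1 / rho x * (esym n k (\<lambda>_. 1) / esym n (k - 1) (\<lambda>_. 1))
      \<le> phi (rho x) / rho x * (esym n k (\<lambda>_. 1) / esym n (k - 1) (\<lambda>_. 1))"
    using esym_quotient_ge[OF k, of "1 / rho x" \<kappa>] pos eq by simp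
  then have "1 / rho x \<le> phi (rho x) / rho x"
    by (rule mult_right_le_imp_le[OF _ esym_ones_quotient_pos[OF k]])
  then show ?thesis using pos by (simp add: divide_le_cancel)
qed

lemma solves_eq_min_radius:
  fixes rho :: "real^'m \<Rightarrow> real"
  assumes k: "1 \<le> k" "k \<le> n" and phi_pos: "\<forall>t>0. 0 < phi t"
    and adm: "admissible_radial rho" and sol: "solves_eq n k phi rho"
    and x: "x \<in> sphere 0 1" and min: "\<forall>y\<in>sphere 0 1. rho x \<le> rho y"
  shows "phi (rho x) \<le> 1"
proof -
  have pos: "0 < rho x" using admissible_radial_pos[OF adm x] .
  obtain \<kappa> where pc: "principal_curvatures n rho (rho x *\<^sub>R x) \<kappa>"
    and cone: "\<kappa> \<in> Gamma_cone n (k - 1)"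
    and eq: "esym n k \<kappa> / esym n (k - 1) \<kappa>
      = phi (rho x) / rho x * (esym n k (\<lambda>_. 1) / esym n (k - 1) (\<lambda>_. 1))"
    using solves_eqD[OF sol x pos] by blast
  have "0 < phi (rho x) / rho x" using phi_pos pos by simp
  then have "0 < esym n k \<kappa> / esym n (k - 1) \<kappa>"
    unfolding eq by (rule mult_pos_pos[OF _ esym_ones_quotient_pos[OF k]])
  then have "0 < esym n k \<kappa>"
    using Gamma_cone_esym_pos[OF cone, of "k - 1"] by (simp add: zero_less_divide_iff)
  moreover have "\<forall>i<n. \<kappa> i \<le> 1 / rho x"
    using principal_curvature_bound_at_extremum[OF adm x _ _ pc, of "-1"] min by simp
  ultimately have "esym n k \<kappa> / esym n (k - 1) \<kappa>
      \<le> 1 / rho x * (esym n k (\<lambda>_. 1) / esym n (k - 1) (\<lambda>_. 1))"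
    by (rule esym_quotient_le[OF k cone])
  then have "phi (rho x) / rho x * (esym n k (\<lambda>_. 1) / esym n (k - 1) (\<lambda>_. 1))
      \<le> 1 / rho x * (esym n k (\<lambda>_. 1) / esym n (k - 1) (\<lambda>_. 1))"
    unfolding eq .
  then have "phi (rho x) / rho x \<le> 1 / rho x"
    by (rule mult_right_le_imp_le[OF _ esym_ones_quotient_pos[OF k]])
  then show ?thesis using pos by (simp add: divide_le_cancel)
qed

lemma solves_eq_imp_round:
  fixes rho :: "real^'m \<Rightarrow> real" and phi :: "real \<Rightarrow> real"
  assumes k: "1 \<le> k" "k \<le> n" and phi_pos: "\<forall>t>0. 0 < phi t"
    and dec: "\<forall>t>0. \<exists>D. (phi has_real_derivative D) (at t) \<and> D < 0"
    and adm: "admissible_radial rho" and sol: "solves_eq n k phi rho"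
    and r0: "0 < rho0" "phi rho0 = 1"
  shows "\<forall>x\<in>sphere 0 1. rho x = rho0"
proof -
  have "sphere (0::real^'m) 1 \<noteq> {}" using norm_axis_1 by (metis mem_sphere_0 empty_iff)
  moreover have "compact (sphere (0::real^'m) 1)" by simp
  ultimately obtain xM xm where xM: "xM \<in> sphere 0 1" "\<forall>y\<in>sphere 0 1. rho y \<le> rho xM"
    and xm: "xm \<in> sphere 0 1" "\<forall>y\<in>sphere 0 1. rho xm \<le> rho y"
    using continuous_attains_sup continuous_attains_inf admissible_radial_continuous[OF adm]
    by metis
  have "rho xM \<le> rho0"
  proof (rule ccontr)
    assume "\<not> rho xM \<le> rho0"
    then have "phi (rho xM) < phi rho0" using decreasing_of_negative_derivative[OF dec r0(1)] by simp
    then show False using solves_eq_max_radius[OF k adm sol xM] r0(2) by simp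
  qed
  moreover have "rho0 \<le> rho xm"
  proof (rule ccontr)
    assume "\<not> rho0 \<le> rho xm"
    then have "phi rho0 < phi (rho xm)"
      using decreasing_of_negative_derivative[OF dec admissible_radial_pos[OF adm xm(1)]] by simp
    then show False using solves_eq_min_radius[OF k phi_pos adm sol xm] r0(2) by simp
  qed
  ultimately show ?thesis using xM xm by force
qed

theorem proposition3p2:
  fixes phi :: "real \<Rightarrow> real" and n k :: nat and r1 r2 :: real
  assumes dim: "CARD('m) = n + 1"
    and n3: "n \<ge> 3" and k2: "2 \<le> k" and kn: "k \<le> n"
    and r: "0 < r1" "r1 < r2"
    and a: "\<forall>t>0. phi t > 0"
    and b: "\<forall>t. 0 < t \<and> t \<le> r1 \<longrightarrow> phi t > 1"
    and c: "\<forall>t. t \<ge> r2 \<longrightarrow> phi t < 1"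
    and d: "\<forall>t>0. \<exists>D. (phi has_real_derivative D) (at t) \<and> D < 0"
  shows "(\<exists>!rho0. rho0 > 0 \<and> phi rho0 = 1)
    \<and> (\<forall>rho0. rho0 > 0 \<and> phi rho0 = 1 \<longrightarrow>
          (\<exists>rho :: real^'m \<Rightarrow> real. admissible_radial rho \<and> solves_eq n k phi rho)
        \<and> (\<forall>rho :: real^'m \<Rightarrow> real. admissible_radial rho \<longrightarrow>
             (solves_eq n k phi rho \<longleftrightarrow> star_hypersurface rho = sphere 0 rho0)))"
proof -
  have k: "1 \<le> k" "k \<le> n" using k2 kn by auto
  have root: "\<exists>!rho0. rho0 > 0 \<and> phi rho0 = 1"
    by (rule ex1_crossing_of_decreasing[OF r _ _ d]) (use b c r in auto)
  have round: "solves_eq n k phi rho \<longleftrightarrow> star_hypersurface rho = sphere 0 rho0"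
    if adm: "admissible_radial rho" and r0: "0 < rho0" "phi rho0 = 1"
    for rho :: "real^'m \<Rightarrow> real" and rho0
    using solves_eq_imp_round[OF k a d adm, of rho0, OF _ r0]
      solves_eq_round[OF dim k adm, of rho0 phi, OF _ r0]
      star_hypersurface_eq_sphere_iff[OF adm r0(1)] by blast
  have sphere: "admissible_radial (\<lambda>_ :: real^'m. rho0) \<and> solves_eq n k phi (\<lambda>_ :: real^'m. rho0)"
    if r0: "0 < rho0" "phi rho0 = 1" for rho0
    using admissible_radial_const[OF r0(1)]
      solves_eq_round[OF dim k admissible_radial_const[OF r0(1)], of rho0 phi, OF _ r0] by simp
  show ?thesis using root round sphere by blast
qed

end
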